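(* Let $a=(a_1,\dots,a_d)\in\mathbb R^d$ with $a_i\ne0$ for all $i$, and let $\hat a=\min_{1\le i\le d}|a_i|$. Define $h(x)=\mathbf 1_{x\le a}$ for $x\in\mathbb R^d$, where $x\le a$ means $x_i\le a_i$ for all $1\le i\le d$. Then $h$ is $\big(3(d/\hat a)^{1/3},\,1/3,\,W\big)$-Lipschitz for every $d\times d$ positive semi-definite matrix $W$.
   Context: Given $\kappa>0$, $\gamma\in(0,1]$ and a $d\times d$ positive semi-definite matrix $W$, a real-valued Borel function $h$ on $\mathbb R^d$ is $(\kappa,\gamma,W)$-Lipschitz if $E((h(X)-h(X'))^2)\le\kappa^2(E\|X-X'\|^2)^{\gamma}$ for every centered Gaussian vector $(X,X')$ in $\mathbb R^{2d}$ ($X,X'$ each $d$-dimensional) with $\mathrm{cov}(X)\le W$ and $\mathrm{cov}(X')\le W$; here $\|\cdot\|$ is the Euclidean norm, $\mathrm{cov}(X)=E(XX^T)$, and $A\le B$ means $B-A$ is positive semi-definite. *)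

theory Defs
  imports "HOL-Probability.Probability"
begin

definition centered_gaussian :: "'a measure \<Rightarrow> ('a \<Rightarrow> 'b::euclidean_space) \<Rightarrow> bool" where
  "centered_gaussian M Z \<longleftrightarrow> Z \<in> borel_measurable M \<and>
     (\<forall>c::'b. \<exists>\<sigma>::real. \<sigma> \<ge> 0 \<and>
        distr M borel (\<lambda>\<omega>. c \<bullet> Z \<omega>) =
          (if \<sigma> = 0 then return borel 0 else density lborel (normal_density 0 \<sigma>)))"

definition cov_matrix :: "'a measure \<Rightarrow> ('a \<Rightarrow> real^'d) \<Rightarrow> real^'d^'d" where
  "cov_matrix M X = (\<chi> i j. integral\<^sup>L M (\<lambda>\<omega>. X \<omega> $ i * X \<omega> $ j))"

definition psd_matrix :: "real^'d^'d \<Rightarrow> bool" where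
  "psd_matrix A \<longleftrightarrow> transpose A = A \<and> (\<forall>v. 0 \<le> v \<bullet> (A *v v))"

definition loewner_le :: "real^'d^'d \<Rightarrow> real^'d^'d \<Rightarrow> bool" where
  "loewner_le A B \<longleftrightarrow> psd_matrix (B - A)"

text \<open>A centered Gaussian vector (X,X') in R^{2d} is
represented by its joint law M on the space real^'d \<times> real^'d, with X = fst, X' = snd
(all quantities involved depend only on the joint law).\<close>
definition kgw_lipschitz :: "real \<Rightarrow> real \<Rightarrow> real^'d^'d \<Rightarrow> (real^'d \<Rightarrow> real) \<Rightarrow> bool" where
  "kgw_lipschitz \<kappa> \<gamma> W h \<longleftrightarrow>
     \<kappa> > 0 \<and> 0 < \<gamma> \<and> \<gamma> \<le> 1 \<and> psd_matrix W \<and> h \<in> borel_measurable borel \<and>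
     (\<forall>M :: ((real^'d) \<times> (real^'d)) measure.
        prob_space M \<longrightarrow> sets M = sets borel \<longrightarrow>
        centered_gaussian M (\<lambda>z. z) \<longrightarrow>
        loewner_le (cov_matrix M fst) W \<longrightarrow> loewner_le (cov_matrix M snd) W \<longrightarrow>
        integral\<^sup>L M (\<lambda>z. (h (fst z) - h (snd z))\<^sup>2)
          \<le> \<kappa>\<^sup>2 * (integral\<^sup>L M (\<lambda>z. (norm (fst z - snd z))\<^sup>2)) powr \<gamma>)"

end

theory Submission imports Defs begin

text \<open>If the indicators of the orthant \<open>{x \<le> a}\<close> differ at \<open>x\<close> and \<open>y\<close>, then some coordinate
\<open>x\<^sub>i\<close> lies within \<open>t\<close> of \<open>a\<^sub>i\<close>, or else \<open>\<parallel>x - y\<parallel> > t\<close>. Taking expectations, the first event has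
probability \<open>O(d t / min |a\<^sub>i|)\<close> because a centered normal variable has density at most
\<open>1 / (2|y|)\<close> at \<open>y\<close>, and the second has probability at most \<open>E\<parallel>X - X'\<parallel>\<^sup>2 / t\<^sup>2\<close> by Markov.
Optimising over \<open>t\<close> gives the exponent \<open>1/3\<close>.\<close>

lemma le_exp_half_square: "(s::real) \<le> exp (s\<^sup>2 / 2)"
proof -
  have "s \<le> 1 + s\<^sup>2 / 2"
    using zero_le_power2[of "s - 1"] by (simp add: power2_diff field_simps)
  also have "\<dots> \<le> exp (s\<^sup>2 / 2)" by (rule exp_ge_add_one_self)
  finally show ?thesis .
qed

lemma normal_density_le_inverse_abs:
  assumes "\<sigma> > 0" "y \<noteq> 0"
  shows "normal_density 0 \<sigma> y \<le> 1 / (2 * \<bar>y\<bar>)"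
proof -
  define s where "s = \<bar>y\<bar> / \<sigma>"
  have s: "s > 0" using assms by (simp add: s_def)
  have "exp (- y\<^sup>2 / (2 * \<sigma>\<^sup>2)) = 1 / exp (s\<^sup>2 / 2)"
    using assms by (simp add: s_def power_divide exp_minus inverse_eq_divide)
  also have "\<dots> \<le> 1 / s"
    using le_exp_half_square[of s] s by (simp add: divide_simps)
  also have "\<dots> = \<sigma> / \<bar>y\<bar>" using assms by (simp add: s_def)
  finally have exp_le: "exp (- y\<^sup>2 / (2 * \<sigma>\<^sup>2)) \<le> \<sigma> / \<bar>y\<bar>" .
  have "2 \<le> sqrt (2 * pi)" using pi_gt3 by (simp add: real_le_rsqrt)
  hence "2 * \<sigma> \<le> sqrt (2 * pi * \<sigma>\<^sup>2)" using assms by (simp add: real_sqrt_mult)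
  hence "1 / sqrt (2 * pi * \<sigma>\<^sup>2) \<le> 1 / (2 * \<sigma>)" using assms by (intro divide_left_mono) auto
  hence "normal_density 0 \<sigma> y \<le> 1 / (2 * \<sigma>) * (\<sigma> / \<bar>y\<bar>)"
    unfolding normal_density_def using exp_le assms by (intro mult_mono) auto
  thus ?thesis using assms by simp
qed

lemma measure_normal_interval_le:
  assumes "\<sigma> > 0" "0 < m" "m \<le> \<bar>b\<bar>" "0 < t" "t < m / 4"
  shows "measure (density lborel (normal_density 0 \<sigma>)) {y. \<bar>y - b\<bar> \<le> t} \<le> 2 * t / m"
proof -
  have interval: "{y. \<bar>y - b\<bar> \<le> t} = {b - t..b + t}" by auto
  have density_le: "normal_density 0 \<sigma> y \<le> 1 / m" if "y \<in> {b - t..b + t}" for y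
  proof -
    have "\<bar>y\<bar> \<ge> m / 2" using that assms by auto
    hence "normal_density 0 \<sigma> y \<le> 1 / (2 * \<bar>y\<bar>)"
      using normal_density_le_inverse_abs[OF assms(1)] assms by auto
    also have "\<dots> \<le> 1 / m" using \<open>\<bar>y\<bar> \<ge> m / 2\<close> assms by (simp add: divide_simps)
    finally show ?thesis .
  qed
  have "emeasure (density lborel (normal_density 0 \<sigma>)) {b - t..b + t}
      = (\<integral>\<^sup>+ y. ennreal (normal_density 0 \<sigma> y) * indicator {b - t..b + t} y \<partial>lborel)"
    by (simp add: emeasure_density)
  also have "\<dots> \<le> (\<integral>\<^sup>+ y. ennreal (1 / m) * indicator {b - t..b + t} y \<partial>lborel)"
    using density_le by (intro nn_integral_mono) (auto split: split_indicator intro!: ennreal_leI)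
  also have "\<dots> = ennreal (2 * t / m)"
    using assms by (simp add: nn_integral_cmult_indicator ennreal_mult[symmetric])
  finally show ?thesis
    unfolding interval measure_def using assms by (simp add: enn2real_leI)
qed

lemma centered_gaussian_distr_inner:
  assumes "sets M = sets borel" "centered_gaussian M (\<lambda>z. z)"
  obtains \<sigma> where "\<sigma> \<ge> 0" "distr M borel (\<lambda>z. c \<bullet> z) =
    (if \<sigma> = 0 then return borel 0 else density lborel (normal_density 0 \<sigma>))"
  using assms(2) unfolding centered_gaussian_def by auto

lemma centered_gaussian_measure_slab_le:
  fixes M :: "'b::euclidean_space measure"
  assumes M: "prob_space M" "sets M = sets borel" "centered_gaussian M (\<lambda>z. z)"
    and "0 < m" "m \<le> \<bar>b\<bar>" "0 < t"
  shows "measure M {z. \<bar>c \<bullet> z - b\<bar> \<le> t} \<le> 4 * t / m"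
proof (cases "t < m / 4")
  case False
  have "measure M {z. \<bar>c \<bullet> z - b\<bar> \<le> t} \<le> 1" using M by (simp add: prob_space.prob_le_1)
  also have "1 \<le> 4 * t / m" using False assms by (simp add: field_simps)
  finally show ?thesis .
next
  case True
  obtain \<sigma> where "\<sigma> \<ge> 0" and distr_eq: "distr M borel (\<lambda>z. c \<bullet> z) =
      (if \<sigma> = 0 then return borel 0 else density lborel (normal_density 0 \<sigma>))"
    using centered_gaussian_distr_inner[OF M(2,3)] .
  have "(\<lambda>z. c \<bullet> z) \<in> measurable M borel"
    unfolding measurable_cong_sets[OF M(2) refl] by simp
  moreover have slab: "{y::real. \<bar>y - b\<bar> \<le> t} \<in> sets borel" by measurable
  ultimately have "measure M {z. \<bar>c \<bullet> z - b\<bar> \<le> t}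
      = measure (distr M borel (\<lambda>z. c \<bullet> z)) {y. \<bar>y - b\<bar> \<le> t}"
    using sets_eq_imp_space_eq[OF M(2)] by (simp add: measure_distr vimage_def)
  also have "\<dots> \<le> 2 * t / m"
  proof (cases "\<sigma> = 0")
    case True
    have "0 \<notin> {y::real. \<bar>y - b\<bar> \<le> t}" using assms \<open>t < m / 4\<close> by auto
    thus ?thesis unfolding distr_eq using True slab assms by (simp add: measure_return)
  next
    case False
    thus ?thesis unfolding distr_eq
      using measure_normal_interval_le[of \<sigma> m b t] \<open>\<sigma> \<ge> 0\<close> assms \<open>t < m / 4\<close> by simp
  qed
  also have "\<dots> \<le> 4 * t / m" using assms by (simp add: divide_right_mono)
  finally show ?thesis .
qed

lemma centered_gaussian_integrable_inner_square:
  fixes M :: "'b::euclidean_space measure"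
  assumes "sets M = sets borel" "centered_gaussian M (\<lambda>z. z)"
  shows "integrable M (\<lambda>z. (c \<bullet> z)\<^sup>2)"
proof -
  obtain \<sigma> where "\<sigma> \<ge> 0" and distr_eq: "distr M borel (\<lambda>z. c \<bullet> z) =
      (if \<sigma> = 0 then return borel 0 else density lborel (normal_density 0 \<sigma>))"
    using centered_gaussian_distr_inner[OF assms] .
  have "integrable (distr M borel (\<lambda>z. c \<bullet> z)) (\<lambda>y::real. y\<^sup>2)"
  proof (cases "\<sigma> = 0")
    case True
    interpret prob_space "return borel (0::real)" by (rule prob_space_return) simp
    have "integrable (return borel (0::real)) (\<lambda>y. y\<^sup>2)"
      by (intro integrable_const_bound[where B=0]) (auto simp: AE_return)
    thus ?thesis unfolding distr_eq using True by simp
  next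
    case False
    hence "\<sigma> > 0" using \<open>\<sigma> \<ge> 0\<close> by simp
    hence "integrable (density lborel (normal_density 0 \<sigma>)) (\<lambda>y::real. y\<^sup>2)"
      using integrable_normal_moment[of \<sigma> 0 2]
      by (subst integrable_density) (auto simp: mult.commute)
    thus ?thesis unfolding distr_eq using False by simp
  qed
  moreover have "(\<lambda>z. c \<bullet> z) \<in> measurable M borel"
    unfolding measurable_cong_sets[OF assms(1) refl] by simp
  ultimately show ?thesis using integrable_distr_eq[of "\<lambda>z. c \<bullet> z" M borel "\<lambda>y. y\<^sup>2"] by simp
qed

lemma measurable_fst_borel[measurable]:
  "fst \<in> borel_measurable (borel :: ('a::euclidean_space \<times> 'b::euclidean_space) measure)"
  by (intro borel_measurable_continuous_onI continuous_intros)

lemma measurable_snd_borel[measurable]: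
  "snd \<in> borel_measurable (borel :: ('a::euclidean_space \<times> 'b::euclidean_space) measure)"
  by (intro borel_measurable_continuous_onI continuous_intros)

lemma norm_diff_square_eq_sum_inner_square:
  fixes z :: "(real^'d) \<times> (real^'d)"
  shows "(norm (fst z - snd z))\<^sup>2 = (\<Sum>i\<in>UNIV. ((axis i 1, - axis i 1) \<bullet> z)\<^sup>2)"
proof -
  have "(norm (fst z - snd z))\<^sup>2 = (fst z - snd z) \<bullet> (fst z - snd z)"
    by (simp add: dot_square_norm)
  hence "(norm (fst z - snd z))\<^sup>2 = (\<Sum>i\<in>UNIV. (fst z $ i - snd z $ i)\<^sup>2)"
    by (simp add: inner_vec_def power2_eq_square)
  thus ?thesis by (simp add: inner_axis' inner_prod_def split_beta)
qed

lemma centered_gaussian_integrable_norm_diff_square: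
  fixes M :: "((real^'d) \<times> (real^'d)) measure"
  assumes "sets M = sets borel" "centered_gaussian M (\<lambda>z. z)"
  shows "integrable M (\<lambda>z. (norm (fst z - snd z))\<^sup>2)"
  unfolding norm_diff_square_eq_sum_inner_square
  using centered_gaussian_integrable_inner_square[OF assms] by auto

lemma orthant_indicator_diff_square_le:
  fixes x y a :: "real^'d"
  assumes "t > 0"
  defines "A \<equiv> {x. \<forall>i. x $ i \<le> a $ i}"
  shows "(indicator A x - indicator A y :: real)\<^sup>2
    \<le> (\<Sum>i\<in>UNIV. indicator {x. \<bar>x $ i - a $ i\<bar> \<le> t} x) + (norm (x - y))\<^sup>2 / t\<^sup>2"
proof (cases "x \<in> A \<longleftrightarrow> y \<in> A")
  case True
  thus ?thesis by (simp add: indicator_def sum_nonneg)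
next
  case False
  then obtain i where "\<not> (x $ i \<le> a $ i \<longleftrightarrow> y $ i \<le> a $ i)" unfolding A_def by blast
  hence near: "\<bar>x $ i - a $ i\<bar> \<le> \<bar>(x - y) $ i\<bar>" by auto
  have indicators_nonneg: "0 \<le> (\<Sum>i\<in>UNIV. indicator {x. \<bar>x $ i - a $ i\<bar> \<le> t} x :: real)"
    by (simp add: sum_nonneg)
  have "1 \<le> (\<Sum>i\<in>UNIV. indicator {x. \<bar>x $ i - a $ i\<bar> \<le> t} x) + (norm (x - y))\<^sup>2 / t\<^sup>2"
  proof (cases "\<bar>x $ i - a $ i\<bar> \<le> t")
    case True
    hence "1 \<le> (\<Sum>i\<in>UNIV. indicator {x. \<bar>x $ i - a $ i\<bar> \<le> t} x :: real)"
      using member_le_sum[of i UNIV "\<lambda>i. indicator {x. \<bar>x $ i - a $ i\<bar> \<le> t} x :: real"]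
      by simp
    thus ?thesis by (simp add: add_increasing2)
  next
    case False
    hence "t < norm (x - y)" using near component_le_norm_cart[of "x - y" i] by linarith
    hence "1 < (norm (x - y))\<^sup>2 / t\<^sup>2" using assms(1) by (simp add: power_strict_mono)
    thus ?thesis using indicators_nonneg by linarith
  qed
  thus ?thesis using False by (simp add: indicator_def)
qed

lemma centered_gaussian_orthant_indicator_diff_le:
  fixes M :: "((real^'d) \<times> (real^'d)) measure" and a :: "real^'d"
  assumes M: "prob_space M" "sets M = sets borel" "centered_gaussian M (\<lambda>z. z)"
    and "0 < m" "\<forall>i. m \<le> \<bar>a $ i\<bar>" "t > 0"
  defines "A \<equiv> {x. \<forall>i. x $ i \<le> a $ i}"
  shows "(\<integral>z. (indicator A (fst z) - indicator A (snd z))\<^sup>2 \<partial>M)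
    \<le> CARD('d) * (4 * t / m) + (\<integral>z. (norm (fst z - snd z))\<^sup>2 \<partial>M) / t\<^sup>2"
proof -
  interpret prob_space M by (rule M(1))
  define E where "E i = {z::(real^'d) \<times> (real^'d). \<bar>(axis i 1, 0) \<bullet> z - a $ i\<bar> \<le> t}" for i
  have E_sets: "E i \<in> sets M" for i unfolding E_def M(2) by measurable
  have int_E: "integrable M (indicator (E i) :: _ \<Rightarrow> real)" for i
    using E_sets by (intro integrable_real_indicator) (auto simp: emeasure_eq_measure)
  have int_norm: "integrable M (\<lambda>z. (norm (fst z - snd z))\<^sup>2)"
    using centered_gaussian_integrable_norm_diff_square[OF M(2,3)] .
  have "(\<lambda>z. (indicator A (fst z) - indicator A (snd z) :: real)\<^sup>2) \<in> borel_measurable M"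
    unfolding measurable_cong_sets[OF M(2) refl] A_def by measurable
  hence int_ind: "integrable M (\<lambda>z. (indicator A (fst z) - indicator A (snd z) :: real)\<^sup>2)"
    by (intro integrable_const_bound[where B=1]) (auto simp: indicator_def)
  have E_fst: "indicator (E i) z = indicator {x. \<bar>x $ i - a $ i\<bar> \<le> t} (fst z)" for i z
    by (simp add: E_def inner_axis' inner_prod_def split_beta indicator_def)
  have "(\<integral>z. (indicator A (fst z) - indicator A (snd z))\<^sup>2 \<partial>M)
      \<le> (\<integral>z. (\<Sum>i\<in>UNIV. indicator (E i) z) + (norm (fst z - snd z))\<^sup>2 / t\<^sup>2 \<partial>M)"
    using orthant_indicator_diff_square_le[OF \<open>t > 0\<close>] int_ind int_E int_norm
    unfolding A_def E_fst by (intro integral_mono) auto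
  also have "\<dots> = (\<Sum>i\<in>UNIV. measure M (E i)) + (\<integral>z. (norm (fst z - snd z))\<^sup>2 \<partial>M) / t\<^sup>2"
    using int_E int_norm sets.sets_into_space[OF E_sets] by (simp add: integral_add Int_absorb2)
  also have "(\<Sum>i\<in>UNIV. measure M (E i)) \<le> (\<Sum>i\<in>(UNIV::'d set). 4 * t / m)"
    unfolding E_def using assms by (intro sum_mono centered_gaussian_measure_slab_le[OF M]) auto
  finally show ?thesis by simp
qed

text \<open>Choosing \<open>t = D\<^sup>1\<^sup>/\<^sup>3 / r\<close> balances the two terms; the case \<open>D = 0\<close> needs \<open>t \<rightarrow> 0\<close>.\<close>

lemma le_of_le_linear_plus_inverse_square:
  fixes L D r :: real
  assumes "r > 0" "D \<ge> 0" and bound: "\<And>t. t > 0 \<Longrightarrow> L \<le> 4 * r ^ 3 * t + D / t\<^sup>2"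
  shows "L \<le> 5 * r\<^sup>2 * D powr (1/3)"
proof (cases "D = 0")
  case True
  have "L \<le> 0"
  proof (rule ccontr)
    assume "\<not> L \<le> 0"
    define t where "t = L / (8 * r ^ 3)"
    have "t > 0" using \<open>\<not> L \<le> 0\<close> assms by (simp add: t_def)
    hence "L \<le> L / 2" using bound[of t] True assms by (simp add: t_def)
    thus False using \<open>\<not> L \<le> 0\<close> by simp
  qed
  thus ?thesis using True by simp
next
  case False
  define q where "q = D powr (1/3)"
  have "q > 0" using False assms by (simp add: q_def)
  have q3: "q ^ 3 = D" using False assms by (simp add: q_def powr_power)
  have "L \<le> 4 * r ^ 3 * (q / r) + D / (q / r)\<^sup>2" using bound[of "q / r"] \<open>q > 0\<close> assms by simp
  also have "\<dots> = 5 * r\<^sup>2 * q"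
    unfolding q3[symmetric] using \<open>q > 0\<close> assms
    by (simp add: field_simps power2_eq_square power3_eq_cube)
  finally show ?thesis by (simp add: q_def)
qed

theorem lemma6p2:
  fixes a :: "real^'d" and W :: "real^'d^'d"
  assumes "\<forall>i. a $ i \<noteq> 0"
    and "psd_matrix W"
  shows "kgw_lipschitz
           (3 * (real CARD('d) / Min (range (\<lambda>i. \<bar>a $ i\<bar>))) powr (1/3)) (1/3) W
           (\<lambda>x. indicator {x. \<forall>i. x $ i \<le> a $ i} x)"
proof -
  define m where "m = Min (range (\<lambda>i. \<bar>a $ i\<bar>))"
  define r where "r = (real CARD('d) / m) powr (1/3)"
  have m_le: "\<forall>i. m \<le> \<bar>a $ i\<bar>" unfolding m_def by (auto intro: Min_le)
  have "m \<in> range (\<lambda>i. \<bar>a $ i\<bar>)" unfolding m_def by (intro Min_in) auto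
  hence "m > 0" using assms(1) by auto
  hence "r > 0" and r3: "r ^ 3 = CARD('d) / m" by (simp_all add: r_def powr_power)
  show ?thesis
    unfolding kgw_lipschitz_def m_def[symmetric] r_def[symmetric]
  proof (intro conjI allI impI)
    fix M :: "((real^'d) \<times> (real^'d)) measure"
    assume M: "prob_space M" "sets M = sets borel" "centered_gaussian M (\<lambda>z. z)"
    let ?I = "indicator {x. \<forall>i. x $ i \<le> a $ i} :: real^'d \<Rightarrow> real"
    let ?D = "\<integral>z. (norm (fst z - snd z))\<^sup>2 \<partial>M"
    have "\<And>t. CARD('d) * (4 * t / m) = 4 * r ^ 3 * t" using r3 by simp
    hence "(\<integral>z. (?I (fst z) - ?I (snd z))\<^sup>2 \<partial>M) \<le> 5 * r\<^sup>2 * ?D powr (1/3)"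
      using centered_gaussian_orthant_indicator_diff_le[OF M \<open>m > 0\<close> m_le]
      by (intro le_of_le_linear_plus_inverse_square \<open>r > 0\<close>) (auto intro: integral_nonneg_AE)
    also have "\<dots> \<le> (3 * r)\<^sup>2 * ?D powr (1/3)"
      by (intro mult_right_mono) (auto simp: power_mult_distrib)
    finally show "(\<integral>z. (?I (fst z) - ?I (snd z))\<^sup>2 \<partial>M) \<le> (3 * r)\<^sup>2 * ?D powr (1/3)" .
  qed (use \<open>r > 0\<close> assms(2) in auto)
qed

end
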